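(* Consider the modified Ghaffari process described in the context, with marking decisions in each phase that are only pairwise independent. If phase $t$ is a type-1 golden phase for an undecided node $v$, i.e., $p_t(v)=1/4$ and $d_t(v)\le 1/2$, then $v$ joins the independent set in phase $t$ (i.e., $v$ is marked and none of its undecided neighbors is marked) with probability at least $1/8$.
   Context: Let $G=(V,E)$ be an undirected graph. The process runs in phases $t=0,1,2,\dots$ on the graph induced by the undecided nodes (initially all nodes); $N(v)$ denotes the set of undecided neighbors of $v$. Each undecided node $v$ has a value $p_t(v)$, with $p_0(v)=1/4$; its effective degree is $d_t(v)=\sum_{u\in N(v)}p_t(u)$. Then $p_{t+1}(v)=p_t(v)/2$ if $d_t(v)\ge 1/2$, and $p_{t+1}(v)=\min\{2p_t(v),1/4\}$ if $d_t(v)<1/2$. In phase $t$, each undecided node $v$ becomes marked with probability $p_t(v)$, where the marking events of the nodes in phase $t$ are pairwise independent (given the state at the start of the phase); a marked node none of whose undecided neighbors is marked joins the independent set, and it and all its neighbors are removed. *)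

theory Defs
  imports "HOL-Probability.Probability"
begin

definition (in prob_space) pairwise_indep_events :: "('i \<Rightarrow> 'a set) \<Rightarrow> 'i set \<Rightarrow> bool" where
  "pairwise_indep_events A I \<longleftrightarrow>
     (\<forall>i\<in>I. A i \<in> events) \<and>
     (\<forall>i\<in>I. \<forall>j\<in>I. i \<noteq> j \<longrightarrow> prob (A i \<inter> A j) = prob (A i) * prob (A j))"

definition undecided_nbrs :: "('v \<Rightarrow> 'v \<Rightarrow> bool) \<Rightarrow> 'v set \<Rightarrow> 'v \<Rightarrow> 'v set" where
  "undecided_nbrs E U v = {u \<in> U. E v u}"

definition eff_degree :: "('v \<Rightarrow> 'v \<Rightarrow> bool) \<Rightarrow> 'v set \<Rightarrow> ('v \<Rightarrow> real) \<Rightarrow> 'v \<Rightarrow> real" where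
  "eff_degree E U p v = (\<Sum>u\<in>undecided_nbrs E U v. p u)"

end

theory Submission
  imports Defs
begin

text \<open>By the union bound, v fails to join only if it is unmarked or marked together with some
  neighbour; pairwise independence makes the latter probability at most
  \<open>p(v) \<cdot> d(v) \<le> 1/4 \<cdot> 1/2\<close>, leaving at least \<open>1/4 - 1/8\<close>.\<close>

lemma (in prob_space) prob_inter_compl_UN_ge:
  assumes "A \<in> events" and "finite N" and "B ` N \<subseteq> events"
  shows "prob A - (\<Sum>i\<in>N. prob (A \<inter> B i)) \<le> prob (A \<inter> (\<Inter>i\<in>N. space M - B i))"
proof -
  define C where "C = (\<Union>i\<in>N. A \<inter> B i)"
  have C_events: "C \<in> events"
    unfolding C_def using assms by (intro sets.finite_UN) auto
  have "A \<inter> (\<Inter>i\<in>N. space M - B i) = A - C"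
    using sets.sets_into_space[OF \<open>A \<in> events\<close>] by (auto simp: C_def)
  moreover have "prob (A - C) = prob A - prob C"
    using assms(1) C_events by (intro finite_measure_Diff) (auto simp: C_def)
  moreover have "prob C \<le> (\<Sum>i\<in>N. prob (A \<inter> B i))"
    unfolding C_def using assms by (intro finite_measure_subadditive_finite) auto
  ultimately show ?thesis by simp
qed

lemma (in prob_space) prob_inter_compl_UN_pairwise_indep_ge:
  assumes indep: "pairwise_indep_events B I"
    and "a \<in> I" and "N \<subseteq> I" and "a \<notin> N" and "finite N"
  shows "prob (B a) * (1 - (\<Sum>i\<in>N. prob (B i))) \<le> prob (B a \<inter> (\<Inter>i\<in>N. space M - B i))"
proof -
  have events: "\<And>i. i \<in> I \<Longrightarrow> B i \<in> events"
    using indep by (simp add: pairwise_indep_events_def)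
  have "prob (B a \<inter> B i) = prob (B a) * prob (B i)" if "i \<in> N" for i
    using indep assms(2-4) that unfolding pairwise_indep_events_def by (metis subsetD)
  then have "(\<Sum>i\<in>N. prob (B a \<inter> B i)) = prob (B a) * (\<Sum>i\<in>N. prob (B i))"
    by (simp add: sum_distrib_left)
  moreover have "prob (B a) - (\<Sum>i\<in>N. prob (B a \<inter> B i)) \<le> prob (B a \<inter> (\<Inter>i\<in>N. space M - B i))"
    using assms(2,3,5) events by (intro prob_inter_compl_UN_ge) auto
  ultimately show ?thesis by (simp add: right_diff_distrib)
qed

theorem lemma3:
  fixes M :: "'a measure" and E :: "'v \<Rightarrow> 'v \<Rightarrow> bool" and U :: "'v set"
    and p :: "'v \<Rightarrow> real" and mark :: "'v \<Rightarrow> 'a set" and v :: 'v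
  assumes "prob_space M"
    and "finite U"
    and "\<And>x y. E x y \<Longrightarrow> E y x"
    and "\<And>x. \<not> E x x"
    and "v \<in> U"
    and "prob_space.pairwise_indep_events M mark U"
    and "\<And>u. u \<in> U \<Longrightarrow> measure M (mark u) = p u"
    and "p v = 1/4"
    and "eff_degree E U p v \<le> 1/2"
  shows "measure M (mark v \<inter> (\<Inter>u\<in>undecided_nbrs E U v. space M - mark u)) \<ge> 1/8"
proof -
  interpret prob_space M by fact
  define N where "N = undecided_nbrs E U v"
  have "N \<subseteq> U" and "v \<notin> N"
    using assms(4) by (auto simp: N_def undecided_nbrs_def)
  then have "prob (mark v) * (1 - (\<Sum>u\<in>N. prob (mark u))) \<le> prob (mark v \<inter> (\<Inter>u\<in>N. space M - mark u))"
    using assms(2,5,6) finite_subset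
    by (intro prob_inter_compl_UN_pairwise_indep_ge[where I = U]) auto
  moreover have "(\<Sum>u\<in>N. prob (mark u)) = eff_degree E U p v"
    using \<open>N \<subseteq> U\<close> assms(7) by (auto simp: N_def eff_degree_def intro: sum.cong)
  ultimately show ?thesis
    using assms(5,7,8,9) by (simp add: N_def)
qed

end
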